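(* Assume the standing setup. If $\lambda_1(\boldsymbol\Omega_K)\le1$ then $\mathbf g(1)=\mathbf 1_K$; if $\lambda_1(\boldsymbol\Omega_K)>1$ then $\mathbf g(1)\neq\mathbf 1_K$.
   Context: Standing setup: $K\ge1$, $\boldsymbol\rho=(\rho_k)$ with $\rho_k\in(0,1)$, $\sum\rho_k=1$; $\mathbf S_K=(s_{kl})$ symmetric with $s_{kl}>0$; $\mathbf D_{\mathbf v}$ diagonal with diagonal $\mathbf v$; $\boldsymbol\Omega_K=\mathbf D_{\boldsymbol\rho^{\odot1/2}}\mathbf S_K\mathbf D_{\boldsymbol\rho^{\odot1/2}}$, $\boldsymbol\Gamma_K=\mathbf S_K\mathbf D_{\boldsymbol\rho}$; $\lambda_1$ = largest eigenvalue. For each $N$, $[N]$ is split into consecutive blocks $B_1,\dots,B_K$ with $|B_k|/N\to\rho_k$; $\Sigma_{ij}=s_{kl}$ for $i\in B_k,j\in B_l$; $\mathbf H$ is symmetric with independent standard Gaussian entries on/above the diagonal; $\mathbf X=\mathbf H\odot\boldsymbol\Sigma^{\odot1/2}-N^{-1/2}\mathrm{Diag}(\boldsymbol\Sigma\mathbf 1)$ ($\odot$ Hadamard product); $\mu_X$ is the a.s. limiting spectral distribution of $\mathbf X/\sqrt N$. QVE: for $z\in\mathbb H_-=\{\Im z<0\}$, $\mathbf g(z)$ is the unique solution in $(\mathbb H_+)^K$ of $\mathbf 1_K=z\mathbf g-\mathbf g\odot\boldsymbol\Gamma_K(\mathbf g-\mathbf 1_K)$, with $\sum_k\rho_kg_k(z)=\int(z-\lambda)^{-1}d\mu_X(\lambda)$;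 $\mathbf g$ extends continuously to $\mathbb H_-\cup\mathbb R$ (analytically off $\mathrm{Supp}(\mu_X)$) and $\mathbf g(1)$ denotes the value of this extension at $z=1$. *)

theory Defs
  imports "HOL-Analysis.Analysis"
begin

definition diag_mat :: "'a::zero ^ 'k \<Rightarrow> 'a ^ 'k ^ 'k" where
  "diag_mat v = (\<chi> i j. if i = j then v $ i else 0)"

definition vec_sqrt :: "real ^ 'k \<Rightarrow> real ^ 'k" where
  "vec_sqrt v = (\<chi> i. sqrt (v $ i))"

definition Omega_K :: "real ^ 'k ^ 'k \<Rightarrow> real ^ 'k \<Rightarrow> real ^ 'k ^ 'k" where
  "Omega_K S \<rho> = diag_mat (vec_sqrt \<rho>) ** S ** diag_mat (vec_sqrt \<rho>)"

definition Gamma_K :: "real ^ 'k ^ 'k \<Rightarrow> real ^ 'k \<Rightarrow> real ^ 'k ^ 'k" where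
  "Gamma_K S \<rho> = S ** diag_mat \<rho>"

definition eigenvalues :: "real ^ 'k ^ 'k \<Rightarrow> real set" where
  "eigenvalues A = {l. \<exists>v. v \<noteq> 0 \<and> A *v v = l *s v}"

definition largest_eigenvalue :: "real ^ 'k ^ 'k \<Rightarrow> real" where
  "largest_eigenvalue A = Max (eigenvalues A)"

definition cmat :: "real ^ 'k ^ 'k \<Rightarrow> complex ^ 'k ^ 'k" where
  "cmat A = (\<chi> i j. complex_of_real (A $ i $ j))"

text \<open>The QVE  1_K = z g - g \<odot> Gamma_K (g - 1_K)  (\<odot> is componentwise product).\<close>
definition QVE :: "real ^ 'k ^ 'k \<Rightarrow> real ^ 'k \<Rightarrow> complex \<Rightarrow> complex ^ 'k \<Rightarrow> bool" where
  "QVE S \<rho> z g \<longleftrightarrow> (1::complex ^ 'k) = z *s g - g * (cmat (Gamma_K S \<rho>) *v (g - 1))"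

end

theory Submission
  imports Defs
begin

text \<open>Write \<open>g\<close> for the solution at \<open>z = 1 - i \<eta>\<close> and let \<open>\<eta> \<down> 0\<close>.
  Taking imaginary parts in \<open>1/g = z - \<Gamma>\<^sub>K (g - 1)\<close> gives
  \<open>Im g / |g|\<^sup>2 = \<eta> + \<Gamma>\<^sub>K Im g\<close>, so \<open>Im g\<close> is a positive supersolution of \<open>\<Gamma>\<^sub>K\<close>
  weighted by \<open>|g|\<^sup>2\<close>. The matrix \<open>\<Gamma>\<^sub>K\<close> is similar to \<open>\<Omega>\<^sub>K\<close> and has a positive
  Perron eigenvector \<open>\<phi>\<close> for \<open>\<lambda>\<^sub>1(\<Omega>\<^sub>K)\<close>.

  If \<open>\<lambda>\<^sub>1 > 1\<close>, comparing \<open>\<phi>\<close> with \<open>Im g\<close> at the coordinate maximizing their ratio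
  yields some \<open>k\<close> with \<open>\<lambda>\<^sub>1 |g\<^sub>k|\<^sup>2 \<le> 1\<close>, which is impossible near \<open>g = 1\<close>.
  If \<open>\<lambda>\<^sub>1 \<le> 1\<close>, \<open>\<phi>\<close> is a supersolution of \<open>\<Gamma>\<^sub>K\<close>. An energy identity, in which the
  \<open>\<Gamma>\<^sub>K\<close>-term is a Hermitian form because \<open>S\<^sub>K\<close> is symmetric, shows that \<open>g(1)\<close> is real;
  then a comparison of \<open>|g - 1|\<close> with \<open>\<surd>(\<phi> Im g) \<rightarrow> 0\<close> gives \<open>g(1) = 1\<close>.\<close>

section \<open>Perron vector of a symmetric positive matrix\<close>

lemma symmetric_matrix_inner_commute:
  fixes A :: "real^'n^'n"
  assumes "transpose A = A"
  shows "(A *v x) \<bullet> y = x \<bullet> (A *v y)"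
  by (metis assms dot_lmul_matrix vector_transpose_matrix)

lemma inner_matrix_vector_eq_sum:
  fixes A :: "real^'n^'n"
  shows "x \<bullet> (A *v x) = (\<Sum>i\<in>UNIV. \<Sum>j\<in>UNIV. A$i$j * x$i * x$j)"
  unfolding inner_vec_def matrix_vector_mult_def by (simp add: sum_distrib_left mult_ac)

lemma rayleigh_max_bound:
  fixes A :: "real^'n^'n"
  assumes x: "norm x = 1" and max: "\<forall>y. norm y = 1 \<longrightarrow> y \<bullet> (A *v y) \<le> x \<bullet> (A *v x)"
  shows "y \<bullet> (A *v y) \<le> (x \<bullet> (A *v x)) * (y \<bullet> y)"
proof (cases "y = 0")
  case False
  define c where "c = norm y"
  have c: "c > 0" using False c_def by simp
  have "norm ((1/c) *\<^sub>R y) = 1" using c c_def by simp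
  then have "((1/c) *\<^sub>R y) \<bullet> (A *v ((1/c) *\<^sub>R y)) \<le> x \<bullet> (A *v x)" using max by blast
  moreover have "((1/c) *\<^sub>R y) \<bullet> (A *v ((1/c) *\<^sub>R y)) = (y \<bullet> (A *v y)) / c^2"
    by (simp del: matrix_scaleR_vector_ac add: matrix_vector_mult_scaleR power2_eq_square)
  ultimately have "(y \<bullet> (A *v y)) / c^2 \<le> x \<bullet> (A *v x)" by linarith
  moreover have "y \<bullet> y = c^2" using c_def by (simp add: dot_square_norm)
  ultimately show ?thesis using c by (simp add: divide_le_eq mult_ac)
qed simp

lemma rayleigh_maximizer_is_eigenvector:
  fixes A :: "real^'n^'n"
  assumes sym: "transpose A = A"
    and x: "norm x = 1" and max: "\<forall>y. norm y = 1 \<longrightarrow> y \<bullet> (A *v y) \<le> x \<bullet> (A *v x)"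
  shows "A *v x = (x \<bullet> (A *v x)) *\<^sub>R x"
proof -
  define \<mu> where "\<mu> = x \<bullet> (A *v x)"
  define r where "r = A *v x - \<mu> *\<^sub>R x"
  define D where "D = \<mu> * (r \<bullet> r) - r \<bullet> (A *v r)"
  have D: "D \<ge> 0" using rayleigh_max_bound[OF x max, of r] unfolding D_def \<mu>_def by simp
  have xx: "x \<bullet> x = 1" using x by (simp add: dot_square_norm)
  \<comment> \<open>the Rayleigh quotient along the line \<open>x + t r\<close> is maximal at \<open>t = 0\<close>\<close>
  have line: "2 * t * (r \<bullet> r) \<le> t^2 * D" for t
  proof -
    have "(x + t *\<^sub>R r) \<bullet> (A *v (x + t *\<^sub>R r)) \<le> \<mu> * ((x + t *\<^sub>R r) \<bullet> (x + t *\<^sub>R r))"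
      using rayleigh_max_bound[OF x max] \<mu>_def by blast
    moreover have "(x + t *\<^sub>R r) \<bullet> (A *v (x + t *\<^sub>R r))
        = \<mu> + 2*t*(r \<bullet> (A *v x)) + t^2 * (r \<bullet> (A *v r))"
      using symmetric_matrix_inner_commute[OF sym, of r x]
      by (simp del: matrix_scaleR_vector_ac
          add: matrix_vector_right_distrib matrix_vector_mult_scaleR inner_add_left inner_add_right
          \<mu>_def inner_commute power2_eq_square algebra_simps)
    moreover have "(x + t *\<^sub>R r) \<bullet> (x + t *\<^sub>R r) = 1 + 2*t*(x \<bullet> r) + t^2*(r \<bullet> r)"
      using xx by (simp add: inner_add_left inner_add_right inner_commute power2_eq_square algebra_simps)
    ultimately have "\<mu> + 2*t*(r \<bullet> (A *v x)) + t^2 * (r \<bullet> (A *v r))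
        \<le> \<mu> * (1 + 2*t*(x \<bullet> r) + t^2*(r \<bullet> r))" by simp
    moreover have "r \<bullet> (A *v x) = r \<bullet> r + \<mu> * (x \<bullet> r)"
      unfolding r_def by (simp add: inner_diff_left inner_diff_right \<mu>_def inner_commute algebra_simps)
    ultimately have "\<mu> + 2*t*(r \<bullet> r + \<mu> * (x \<bullet> r)) + t^2 * (r \<bullet> (A *v r))
        \<le> \<mu> * (1 + 2*t*(x \<bullet> r) + t^2*(r \<bullet> r))" by simp
    then show ?thesis unfolding D_def by (simp add: algebra_simps)
  qed
  have "r \<bullet> r = 0"
  proof (rule ccontr)
    assume "r \<bullet> r \<noteq> 0"
    then have p: "r \<bullet> r > 0" by (simp add: order_le_neq_trans)
    define t where "t = (r \<bullet> r) / (D + 1)"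
    have t: "t > 0" using p D t_def by simp
    have "2 * (r \<bullet> r) \<le> t * D" using line[of t] t by (simp add: power2_eq_square)
    also have "\<dots> < r \<bullet> r" unfolding t_def using p D by (simp add: field_simps)
    finally show False using p by simp
  qed
  then show ?thesis unfolding r_def \<mu>_def by simp
qed

lemma eigenvalue_le_rayleigh_max:
  fixes A :: "real^'n^'n"
  assumes x: "norm x = 1" and max: "\<forall>y. norm y = 1 \<longrightarrow> y \<bullet> (A *v y) \<le> x \<bullet> (A *v x)"
    and l: "l \<in> eigenvalues A"
  shows "l \<le> x \<bullet> (A *v x)"
proof -
  obtain v where v: "v \<noteq> 0" "A *v v = l *s v" using l unfolding eigenvalues_def by blast
  have "l * (v \<bullet> v) = v \<bullet> (A *v v)" using v by (simp add: scalar_mult_eq_scaleR)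
  also have "\<dots> \<le> (x \<bullet> (A *v x)) * (v \<bullet> v)" by (rule rayleigh_max_bound[OF x max])
  finally show ?thesis using v by (simp add: mult_le_cancel_right_pos)
qed

lemma finite_eigenvalues_symmetric:
  fixes A :: "real^'n^'n"
  assumes sym: "transpose A = A"
  shows "finite (eigenvalues A)"
proof -
  have "\<forall>l\<in>eigenvalues A. \<exists>v. v \<noteq> 0 \<and> A *v v = l *\<^sub>R v"
    unfolding eigenvalues_def by (simp add: scalar_mult_eq_scaleR)
  from bchoice[OF this] obtain ev where "\<forall>l\<in>eigenvalues A. ev l \<noteq> 0 \<and> A *v ev l = l *\<^sub>R ev l"
    by blast
  then have ev: "\<And>l. l \<in> eigenvalues A \<Longrightarrow> ev l \<noteq> 0 \<and> A *v ev l = l *\<^sub>R ev l" by blast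
  have inj: "inj_on ev (eigenvalues A)"
  proof (rule inj_onI)
    fix l l' assume l: "l \<in> eigenvalues A" and l': "l' \<in> eigenvalues A" and eq: "ev l = ev l'"
    have "l *\<^sub>R ev l = A *v ev l" using ev[OF l] by simp
    also have "\<dots> = l' *\<^sub>R ev l" using ev[OF l'] by (simp only: eq)
    finally show "l = l'" using ev[OF l] by simp
  qed
  have "pairwise orthogonal (ev ` eigenvalues A)"
  proof (rule pairwise_imageI)
    fix l l' assume l: "l \<in> eigenvalues A" and l': "l' \<in> eigenvalues A" and ne: "ev l \<noteq> ev l'"
    have "l * (ev l \<bullet> ev l') = (A *v ev l) \<bullet> ev l'" using ev[OF l] by simp
    also have "\<dots> = ev l \<bullet> (A *v ev l')" by (rule symmetric_matrix_inner_commute[OF sym])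
    also have "\<dots> = l' * (ev l \<bullet> ev l')" using ev[OF l'] by simp
    finally have "ev l \<bullet> ev l' = 0" using ne by auto
    then show "orthogonal (ev l) (ev l')" unfolding orthogonal_def .
  qed
  moreover have "0 \<notin> ev ` eigenvalues A" using ev by (metis imageE)
  ultimately have "finite (ev ` eigenvalues A)"
    by (intro finiteI_independent pairwise_orthogonal_independent)
  then show ?thesis using inj finite_imageD by blast
qed

text \<open>Replacing a maximizer of the Rayleigh quotient by its entrywise absolute value does not
  decrease the quotient.\<close>
lemma largest_eigenvalue_nonneg_eigenvector:
  fixes A :: "real^'n^'n"
  assumes sym: "transpose A = A" and pos: "\<And>i j. 0 < A$i$j"
  obtains e where "e \<noteq> 0" "\<And>i. 0 \<le> e$i" "A *v e = largest_eigenvalue A *s e"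
proof -
  have cont: "continuous_on (sphere 0 1) (\<lambda>x::real^'n. x \<bullet> (A *v x))"
    unfolding inner_matrix_vector_eq_sum by (intro continuous_intros)
  obtain x where "x \<in> sphere 0 1" and xmax: "\<forall>y\<in>sphere 0 1. y \<bullet> (A *v y) \<le> x \<bullet> (A *v x)"
    using continuous_attains_sup[OF compact_sphere _ cont] by auto
  then have x: "norm x = 1" by simp
  define e where "e = (\<chi> i. \<bar>x$i\<bar>)"
  have e: "norm e = 1" using x unfolding e_def norm_vec_def by simp
  have abs_better: "x \<bullet> (A *v x) \<le> e \<bullet> (A *v e)"
    unfolding inner_matrix_vector_eq_sum e_def
  proof (intro sum_mono)
    fix i j
    have "A$i$j * x$i * x$j \<le> A$i$j * (\<bar>x$i\<bar> * \<bar>x$j\<bar>)"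
      using pos[of i j] by (simp add: mult.assoc abs_mult[symmetric] mult_left_mono)
    then show "A$i$j * x$i * x$j \<le> A$i$j * (\<chi> i. \<bar>x$i\<bar>)$i * (\<chi> i. \<bar>x$i\<bar>)$j"
      by (simp add: mult.assoc)
  qed
  have emax: "\<forall>y. norm y = 1 \<longrightarrow> y \<bullet> (A *v y) \<le> e \<bullet> (A *v e)"
    using xmax abs_better by (auto intro: order_trans)
  have eig: "A *v e = (e \<bullet> (A *v e)) *\<^sub>R e"
    by (rule rayleigh_maximizer_is_eigenvector[OF sym e emax])
  have "e \<noteq> 0" using e by auto
  then have "e \<bullet> (A *v e) \<in> eigenvalues A"
    unfolding eigenvalues_def scalar_mult_eq_scaleR using eig by blast
  then have "largest_eigenvalue A = e \<bullet> (A *v e)"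
    unfolding largest_eigenvalue_def
    by (intro Max_eqI finite_eigenvalues_symmetric[OF sym] eigenvalue_le_rayleigh_max[OF e emax])
  moreover have "\<And>i. 0 \<le> e$i" unfolding e_def by simp
  ultimately show ?thesis using that eig \<open>e \<noteq> 0\<close> by (simp add: scalar_mult_eq_scaleR)
qed

lemma Gamma_K_entry: "Gamma_K S \<rho> $ k $ l = S$k$l * \<rho>$l"
  unfolding Gamma_K_def matrix_matrix_mult_def diag_mat_def
  by (simp add: if_distrib[of "(*) _"] if_distribR cong: if_cong)

lemma Omega_K_entry: "Omega_K S \<rho> $ i $ j = sqrt (\<rho>$i) * S$i$j * sqrt (\<rho>$j)"
  unfolding Omega_K_def matrix_matrix_mult_def diag_mat_def vec_sqrt_def
  by (simp add: if_distrib[of "(*) _"] if_distrib[of "(*)"] if_distribR cong: if_cong)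

lemma QVE_componentwise:
  fixes g :: "complex^'k"
  assumes "QVE S \<rho> z g"
  shows "1 = z * g$k - g$k * (\<Sum>l\<in>UNIV. complex_of_real (S$k$l * \<rho>$l) * (g$l - 1))"
proof -
  have "(1::complex^'k) $ k = (z *s g - g * (cmat (Gamma_K S \<rho>) *v (g - 1))) $ k"
    using assms unfolding QVE_def by simp
  then show ?thesis by (simp add: cmat_def Gamma_K_entry matrix_vector_mult_def)
qed

lemma nonneg_eigenvector_pos:
  fixes G :: "'k::finite \<Rightarrow> 'k \<Rightarrow> real" and \<phi> :: "'k \<Rightarrow> real"
  assumes G_pos: "\<And>k l. 0 < G k l" and nonneg: "\<And>l. 0 \<le> \<phi> l" and nonzero: "\<phi> l0 \<noteq> 0"
    and eig: "\<And>k. (\<Sum>l\<in>UNIV. G k l * \<phi> l) = \<mu> * \<phi> k"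
  shows "0 < \<phi> k"
proof -
  have "0 < G k l0 * \<phi> l0" using G_pos nonneg[of l0] nonzero by (simp add: less_le)
  also have "\<dots> \<le> (\<Sum>l\<in>UNIV. G k l * \<phi> l)"
    by (intro member_le_sum mult_nonneg_nonneg less_imp_le G_pos nonneg) auto
  finally have "0 < \<mu> * \<phi> k" by (simp add: eig)
  then show ?thesis using nonneg[of k] by (auto simp: less_le)
qed

lemma Gamma_K_positive_eigenvector:
  fixes S :: "real^'k^'k"
  assumes S_sym: "transpose S = S" and S_pos: "\<And>k l. 0 < S$k$l" and \<rho>_pos: "\<And>k. 0 < \<rho>$k"
  obtains \<phi> :: "'k \<Rightarrow> real" where "\<And>k. 0 < \<phi> k"
    and "\<And>k. (\<Sum>l\<in>UNIV. S$k$l * \<rho>$l * \<phi> l) = largest_eigenvalue (Omega_K S \<rho>) * \<phi> k"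
proof -
  define \<mu> where "\<mu> = largest_eigenvalue (Omega_K S \<rho>)"
  have "transpose (Omega_K S \<rho>) = Omega_K S \<rho>"
    using S_sym by (simp add: vec_eq_iff transpose_def Omega_K_entry mult_ac)
  moreover have "\<And>i j. 0 < Omega_K S \<rho> $ i $ j"
    using S_pos \<rho>_pos by (simp add: Omega_K_entry)
  ultimately obtain e where e: "e \<noteq> 0" "\<And>i. 0 \<le> e$i" "Omega_K S \<rho> *v e = \<mu> *s e"
    unfolding \<mu>_def using largest_eigenvalue_nonneg_eigenvector by blast
  \<comment> \<open>\<open>D\<^sub>\<rho>\<^sup>-\<^sup>1\<^sup>/\<^sup>2\<close> maps eigenvectors of \<open>\<Omega>\<^sub>K\<close> to eigenvectors of \<open>\<Gamma>\<^sub>K\<close>\<close>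
  define \<phi> where "\<phi> l = e$l / sqrt (\<rho>$l)" for l
  have \<rho>_\<phi>: "\<rho>$l * \<phi> l = sqrt (\<rho>$l) * e$l" for l
  proof -
    have "\<rho>$l * \<phi> l = e$l * (\<rho>$l / sqrt (\<rho>$l))" by (simp add: \<phi>_def mult.commute)
    also have "\<dots> = sqrt (\<rho>$l) * e$l" using \<rho>_pos[of l] by (simp add: real_div_sqrt)
    finally show ?thesis .
  qed
  have eig: "(\<Sum>l\<in>UNIV. S$k$l * \<rho>$l * \<phi> l) = \<mu> * \<phi> k" for k
  proof -
    have "sqrt (\<rho>$k) * (\<Sum>l\<in>UNIV. S$k$l * \<rho>$l * \<phi> l)
        = (\<Sum>l\<in>UNIV. sqrt (\<rho>$k) * S$k$l * sqrt (\<rho>$l) * e$l)"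
      by (simp add: sum_distrib_left mult.assoc \<rho>_\<phi>)
    also have "\<dots> = (Omega_K S \<rho> *v e) $ k"
      by (simp add: matrix_vector_mult_def Omega_K_entry)
    also have "\<dots> = sqrt (\<rho>$k) * (\<mu> * \<phi> k)"
      using e(3) \<rho>_pos[of k] by (simp add: \<phi>_def)
    finally show ?thesis using \<rho>_pos[of k] by simp
  qed
  obtain l0 where "e$l0 \<noteq> 0" using e(1) by (metis vec_eq_iff zero_index)
  then have \<phi>_l0: "\<phi> l0 \<noteq> 0" using \<rho>_pos[of l0] by (simp add: \<phi>_def)
  have \<phi>_nonneg: "0 \<le> \<phi> l" for l using e(2)[of l] \<rho>_pos[of l] by (simp add: \<phi>_def)
  have "0 < \<phi> k" for k
    using nonneg_eigenvector_pos[where G = "\<lambda>k l. S$k$l * \<rho>$l", OF _ \<phi>_nonneg \<phi>_l0 eig] S_pos \<rho>_pos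
    by simp
  then show ?thesis using eig unfolding \<mu>_def by (rule that)
qed

section \<open>Comparison inequalities\<close>

lemma finite_UNIV_argmax:
  fixes h :: "'k::finite \<Rightarrow> 'a::linorder"
  shows "\<exists>k. \<forall>l. h l \<le> h k"
proof -
  have "Max (range h) \<in> range h" by (simp add: Max_in)
  then obtain k where "h k = Max (range h)" by (metis rangeE)
  then have "h l \<le> h k" for l using Max_ge[of "range h" "h l"] by simp
  then show ?thesis by blast
qed

text \<open>A Collatz--Wielandt argument at the coordinate maximizing \<open>f / v\<close>.\<close>
lemma eigenvalue_le_inverse_square:
  fixes G :: "'k::finite \<Rightarrow> 'k \<Rightarrow> real" and f v c :: "'k \<Rightarrow> real"
  assumes G_nonneg: "\<And>k l. 0 \<le> G k l" and v_pos: "\<And>k. 0 < v k" and f_pos: "\<And>k. 0 < f k"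
    and c_pos: "\<And>k. 0 < c k"
    and sub: "\<And>k. (\<Sum>l\<in>UNIV. G k l * v l) \<le> v k / (c k)^2"
    and eig: "\<And>k. (\<Sum>l\<in>UNIV. G k l * f l) = \<mu> * f k"
  shows "\<exists>k. \<mu> * (c k)^2 \<le> 1"
proof -
  from finite_UNIV_argmax[of "\<lambda>l. f l / v l"] obtain k where k: "\<And>l. f l / v l \<le> f k / v k"
    by blast
  define m where "m = f k / v k"
  have m: "0 < m" using f_pos v_pos by (simp add: m_def)
  have f_le: "f l \<le> m * v l" for l
    using k[of l] v_pos[of l] by (simp add: m_def divide_le_eq)
  have "\<mu> * f k = (\<Sum>l\<in>UNIV. G k l * f l)" by (rule eig[symmetric])
  also have "\<dots> \<le> (\<Sum>l\<in>UNIV. G k l * (m * v l))"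
    by (intro sum_mono mult_left_mono G_nonneg f_le)
  also have "\<dots> = m * (\<Sum>l\<in>UNIV. G k l * v l)" by (simp add: sum_distrib_left mult_ac)
  also have "\<dots> \<le> m * (v k / (c k)^2)" using sub m by (intro mult_left_mono) auto
  also have "\<dots> = f k / (c k)^2" using v_pos[of k] by (simp add: m_def)
  finally have "\<mu> * (c k)^2 * f k \<le> 1 * f k"
    using c_pos[of k] by (simp add: pos_le_divide_eq mult_ac)
  then show ?thesis by (metis f_pos mult_le_cancel_right_pos)
qed

lemma sum_mult_sqrt_le:
  fixes w a b :: "'i \<Rightarrow> real"
  assumes "\<And>i. 0 \<le> w i" "\<And>i. 0 \<le> a i" "\<And>i. 0 \<le> b i"
  shows "(\<Sum>i\<in>I. w i * sqrt (a i * b i)) \<le> sqrt (\<Sum>i\<in>I. w i * a i) * sqrt (\<Sum>i\<in>I. w i * b i)"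
proof -
  have split: "w i * sqrt (a i * b i) = sqrt (w i * a i) * sqrt (w i * b i)" for i
    using assms by (simp add: real_sqrt_mult real_sqrt_mult_self mult_ac)
  have "(\<Sum>i\<in>I. w i * sqrt (a i * b i))^2
      \<le> (\<Sum>i\<in>I. (sqrt (w i * a i))^2) * (\<Sum>i\<in>I. (sqrt (w i * b i))^2)"
    unfolding split by (rule Cauchy_Schwarz_ineq_sum)
  also have "\<dots> = (\<Sum>i\<in>I. w i * a i) * (\<Sum>i\<in>I. w i * b i)"
    using assms by simp
  finally have "(\<Sum>i\<in>I. w i * sqrt (a i * b i)) \<le> sqrt ((\<Sum>i\<in>I. w i * a i) * (\<Sum>i\<in>I. w i * b i))"
    by (rule real_le_rsqrt)
  then show ?thesis by (simp add: real_sqrt_mult)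
qed

lemma sqrt_diff_lower_bound:
  fixes a \<epsilon> :: real
  assumes "0 \<le> \<epsilon>" "\<epsilon> \<le> a"
  shows "\<epsilon> \<le> 2 * sqrt a * (sqrt a - sqrt (a - \<epsilon>))"
proof -
  define p q where "p = sqrt a" and "q = sqrt (a - \<epsilon>)"
  have "0 \<le> q" "q \<le> p" using assms by (simp_all add: p_def q_def)
  have "\<epsilon> = p^2 - q^2" using assms by (simp add: p_def q_def)
  also have "\<dots> = (p - q) * (p + q)" by (simp add: power2_eq_square algebra_simps)
  also have "\<dots> \<le> (p - q) * (2 * p)"
    using \<open>0 \<le> q\<close> \<open>q \<le> p\<close> by (intro mult_left_mono) auto
  finally show ?thesis by (simp add: p_def q_def mult_ac)
qed

lemma sqrt_gap_ratio_bound: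
  fixes m p c \<eta> A v :: real
  assumes m: "0 \<le> m" and p: "0 < p" and c: "0 < c" and \<eta>: "0 < \<eta>" and A: "0 \<le> A"
    and v: "v = c^2 * (\<eta> + A)" and le: "m * sqrt v * p \<le> c * (\<eta> + m * sqrt A * p)"
  shows "m * p * c \<le> 2 * sqrt v"
proof -
  define \<epsilon> where "\<epsilon> = \<eta> * c^2"
  have v\<epsilon>: "v - \<epsilon> = c^2 * A" using v by (simp add: \<epsilon>_def algebra_simps)
  have "0 \<le> c^2 * A" using A by simp
  then have \<epsilon>: "0 \<le> \<epsilon>" "\<epsilon> \<le> v" using v\<epsilon> \<eta> by (simp_all add: \<epsilon>_def)
  have cA: "c * sqrt A = sqrt (v - \<epsilon>)" using c A by (simp add: v\<epsilon> real_sqrt_mult)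
  have gap: "m * p * (sqrt v - sqrt (v - \<epsilon>)) \<le> c * \<eta>"
    using le unfolding cA[symmetric] by (simp add: algebra_simps)
  have "m * p * \<epsilon> \<le> m * p * (2 * sqrt v * (sqrt v - sqrt (v - \<epsilon>)))"
    using m p by (intro mult_left_mono sqrt_diff_lower_bound \<epsilon>) auto
  also have "\<dots> = 2 * sqrt v * (m * p * (sqrt v - sqrt (v - \<epsilon>)))" by (simp add: mult_ac)
  also have "\<dots> \<le> 2 * sqrt v * (c * \<eta>)" using gap \<epsilon> by (intro mult_left_mono) auto
  finally have "(m * p * c) * (\<eta> * c) \<le> (2 * sqrt v) * (\<eta> * c)"
    by (simp add: \<epsilon>_def power2_eq_square mult_ac)
  then show ?thesis using \<eta> c by simp
qed

text \<open>Applied with \<open>v = Im g\<close> and \<open>H = |g - 1|\<close>, this forces \<open>g \<rightarrow> 1\<close> when \<open>Im g \<rightarrow> 0\<close>.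
  The proof compares \<open>H\<close> with \<open>\<surd>(v \<psi>)\<close> at the coordinate maximizing their ratio.\<close>
lemma subsolution_le_sqrt_bound:
  fixes G :: "'k::finite \<Rightarrow> 'k \<Rightarrow> real" and \<psi> v c H :: "'k \<Rightarrow> real"
  assumes G_nonneg: "\<And>k l. 0 \<le> G k l" and \<psi>_pos: "\<And>k. 0 < \<psi> k"
    and \<psi>_super: "\<And>k. (\<Sum>l\<in>UNIV. G k l * \<psi> l) \<le> \<psi> k"
    and v_pos: "\<And>k. 0 < v k" and c_pos: "\<And>k. 0 < c k" and \<eta>: "0 < \<eta>"
    and v_eq: "\<And>k. v k / (c k)^2 = \<eta> + (\<Sum>l\<in>UNIV. G k l * v l)"
    and H_nonneg: "\<And>k. 0 \<le> H k" and H_sub: "\<And>k. H k \<le> c k * (\<eta> + (\<Sum>l\<in>UNIV. G k l * H l))"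
  shows "H l \<le> (\<Sum>k\<in>UNIV. 2 * sqrt (v k / \<psi> k) / c k) * sqrt (v l * \<psi> l)"
proof -
  define u where "u l = sqrt (v l * \<psi> l)" for l
  have u_pos: "0 < u l" for l using v_pos \<psi>_pos by (simp add: u_def)
  from finite_UNIV_argmax[of "\<lambda>l. H l / u l"] obtain k where k: "\<And>l. H l / u l \<le> H k / u k"
    by blast
  define m where "m = H k / u k"
  have m: "0 \<le> m" using H_nonneg[of k] u_pos[of k] by (simp add: m_def)
  have H_le: "H l \<le> m * u l" for l using k[of l] u_pos[of l] by (simp add: m_def divide_le_eq)
  define A where "A = (\<Sum>l\<in>UNIV. G k l * v l)"
  have A: "0 \<le> A" unfolding A_def by (intro sum_nonneg mult_nonneg_nonneg G_nonneg less_imp_le v_pos)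
  have "(\<Sum>l\<in>UNIV. G k l * H l) \<le> (\<Sum>l\<in>UNIV. G k l * (m * u l))"
    by (intro sum_mono mult_left_mono G_nonneg H_le)
  also have "\<dots> = m * (\<Sum>l\<in>UNIV. G k l * u l)" by (simp add: sum_distrib_left mult_ac)
  also have "\<dots> \<le> m * (sqrt A * sqrt (\<psi> k))"
  proof (intro mult_left_mono m)
    have "(\<Sum>l\<in>UNIV. G k l * u l) \<le> sqrt A * sqrt (\<Sum>l\<in>UNIV. G k l * \<psi> l)"
      unfolding u_def A_def using G_nonneg v_pos \<psi>_pos by (intro sum_mult_sqrt_le) (auto intro: less_imp_le)
    also have "\<dots> \<le> sqrt A * sqrt (\<psi> k)" by (intro mult_left_mono real_sqrt_le_mono \<psi>_super) (simp add: A)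
    finally show "(\<Sum>l\<in>UNIV. G k l * u l) \<le> sqrt A * sqrt (\<psi> k)" .
  qed
  finally have GH: "(\<Sum>l\<in>UNIV. G k l * H l) \<le> m * sqrt A * sqrt (\<psi> k)" by (simp add: mult_ac)
  have "m * sqrt (v k) * sqrt (\<psi> k) = H k"
    using u_pos[of k] v_pos[of k] \<psi>_pos[of k] by (simp add: m_def u_def real_sqrt_mult)
  also have "\<dots> \<le> c k * (\<eta> + m * sqrt A * sqrt (\<psi> k))"
    using H_sub[of k] GH c_pos[of k] by (smt (verit) mult_left_mono)
  finally have le: "m * sqrt (v k) * sqrt (\<psi> k) \<le> c k * (\<eta> + m * sqrt A * sqrt (\<psi> k))" .
  have vk: "v k = (c k)^2 * (\<eta> + A)" using v_eq[of k] c_pos[of k] by (simp add: A_def field_simps)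
  have "m * sqrt (\<psi> k) * c k \<le> 2 * sqrt (v k)"
    by (rule sqrt_gap_ratio_bound[OF m _ c_pos \<eta> A vk le]) (simp add: \<psi>_pos)
  then have m_le: "m \<le> 2 * sqrt (v k / \<psi> k) / c k"
    using \<psi>_pos[of k] c_pos[of k] by (simp add: real_sqrt_divide field_simps)
  have "H l \<le> (2 * sqrt (v k / \<psi> k) / c k) * u l"
    using H_le[of l] m_le u_pos[of l] by (meson mult_right_mono less_imp_le order_trans)
  also have "\<dots> \<le> (\<Sum>k\<in>UNIV. 2 * sqrt (v k / \<psi> k) / c k) * u l"
    using v_pos \<psi>_pos c_pos u_pos[of l]
    by (intro mult_right_mono member_le_sum) (auto intro: less_imp_le)
  finally show ?thesis unfolding u_def .
qed

section \<open>The QVE along the segment approaching \<open>z = 1\<close>\<close>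

lemma QVE_scalar:
  fixes w z T :: complex
  assumes "1 = z * w - w * T"
  shows "w \<noteq> 0" and "inverse w = z - T" and "w - 1 = w * ((1 - z) + T)"
proof -
  have w: "w * (z - T) = 1" using assms by (simp add: algebra_simps)
  then show "w \<noteq> 0" by auto
  show "inverse w = z - T" using w by (rule inverse_unique)
  show "w - 1 = w * ((1 - z) + T)" using w by (simp add: algebra_simps)
qed

lemma Im_hermitian_form_eq_zero:
  fixes s :: "'k \<Rightarrow> 'k \<Rightarrow> real" and x :: "'k \<Rightarrow> complex"
  assumes sym: "\<And>k l. s k l = s l k"
  shows "Im (\<Sum>k\<in>I. \<Sum>l\<in>I. of_real (s k l) * cnj (x k) * x l) = 0"
proof -
  let ?Q = "\<Sum>k\<in>I. \<Sum>l\<in>I. of_real (s k l) * cnj (x k) * x l"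
  have "cnj ?Q = (\<Sum>k\<in>I. \<Sum>l\<in>I. of_real (s l k) * cnj (x l) * x k)"
    by (simp add: sym mult_ac)
  also have "\<dots> = ?Q" by (rule sum.swap)
  finally show ?thesis using Reals_cnj_iff complex_is_Real_iff by blast
qed

lemma tendsto_le_at_right:
  fixes f h :: "real \<Rightarrow> real"
  assumes "(f \<longlongrightarrow> a) (at_right x)" and "(h \<longlongrightarrow> b) (at_right x)"
    and "\<And>y. x < y \<Longrightarrow> f y \<le> h y"
  shows "a \<le> b"
proof -
  have "\<forall>\<^sub>F y in at_right x. f y \<le> h y"
    using eventually_at_right_less by (rule eventually_mono) (rule assms(3))
  then show ?thesis using tendsto_le[OF _ assms(2,1)] by simp
qed

lemma tendsto_from_lower_half_plane:
  assumes "continuous_on ({z. Im z < 0} \<union> \<real>) g"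
  shows "((\<lambda>\<eta>. g (Complex x (- \<eta>))) \<longlongrightarrow> g (of_real x)) (at_right 0)"
proof (rule continuous_on_tendsto_compose[OF assms])
  have "((\<lambda>\<eta>. Complex x (- \<eta>)) \<longlongrightarrow> Complex x (- 0)) (at_right 0)"
    by (intro tendsto_intros)
  then show "((\<lambda>\<eta>. Complex x (- \<eta>)) \<longlongrightarrow> of_real x) (at_right 0)"
    by (simp add: complex_of_real_def)
  show "\<forall>\<^sub>F \<eta> in at_right 0. Complex x (- \<eta>) \<in> {z. Im z < 0} \<union> \<real>"
    using eventually_at_right_less by (rule eventually_mono) simp
qed simp

text \<open>The solution of the QVE along the vertical segment \<open>z = 1 - i \<eta>\<close>, \<open>\<eta> \<down> 0\<close>,
  written componentwise: \<open>s\<close> and \<open>r\<close> are the entries of \<open>S\<^sub>K\<close> and \<open>\<rho>\<close>, so that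
  \<open>s k l * r l\<close> are the entries of \<open>\<Gamma>\<^sub>K\<close>, and \<open>g0\<close> is the boundary value \<open>g(1)\<close>.\<close>
locale QVE_path =
  fixes s :: "'k::finite \<Rightarrow> 'k \<Rightarrow> real" and r :: "'k \<Rightarrow> real"
    and g :: "real \<Rightarrow> 'k \<Rightarrow> complex" and g0 :: "'k \<Rightarrow> complex"
  assumes s_sym: "s k l = s l k" and s_pos: "0 < s k l" and r_pos: "0 < r k"
    and Im_pos: "0 < \<eta> \<Longrightarrow> 0 < Im (g \<eta> k)"
    and QVE: "0 < \<eta> \<Longrightarrow>
      1 = Complex 1 (- \<eta>) * g \<eta> k - g \<eta> k * (\<Sum>l\<in>UNIV. of_real (s k l * r l) * (g \<eta> l - 1))"
    and tendsto_g0: "((\<lambda>\<eta>. g \<eta> k) \<longlongrightarrow> g0 k) (at_right 0)"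
begin

lemma Gamma_nonneg: "0 \<le> s k l * r l"
  using s_pos r_pos by (simp add: less_imp_le)

lemma g_nonzero: "0 < \<eta> \<Longrightarrow> g \<eta> k \<noteq> 0"
  by (rule QVE_scalar(1)[OF QVE])

lemma Im_g_equation:
  assumes "0 < \<eta>"
  shows "Im (g \<eta> k) / (cmod (g \<eta> k))^2 = \<eta> + (\<Sum>l\<in>UNIV. s k l * r l * Im (g \<eta> l))"
proof -
  have "- (Im (g \<eta> k) / (cmod (g \<eta> k))^2) = Im (inverse (g \<eta> k))"
    by (simp add: cmod_power2)
  also have "\<dots> = Im (Complex 1 (- \<eta>) - (\<Sum>l\<in>UNIV. of_real (s k l * r l) * (g \<eta> l - 1)))"
    by (simp only: QVE_scalar(2)[OF QVE[OF assms]])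
  also have "\<dots> = - (\<eta> + (\<Sum>l\<in>UNIV. s k l * r l * Im (g \<eta> l)))"
    by (simp add: Im_sum)
  finally show ?thesis by simp
qed

lemma g_minus_one_eq:
  assumes "0 < \<eta>"
  shows "g \<eta> k - 1 = g \<eta> k * (Complex 0 \<eta> + (\<Sum>l\<in>UNIV. of_real (s k l * r l) * (g \<eta> l - 1)))"
proof -
  have "1 - Complex 1 (- \<eta>) = Complex 0 \<eta>" by (simp add: complex_eq_iff)
  with QVE_scalar(3)[OF QVE[OF assms, where k = k]] show ?thesis by (simp only:)
qed

lemma norm_g_minus_one_le:
  assumes "0 < \<eta>"
  shows "cmod (g \<eta> k - 1) \<le> cmod (g \<eta> k) * (\<eta> + (\<Sum>l\<in>UNIV. s k l * r l * cmod (g \<eta> l - 1)))"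
proof -
  define T where "T = (\<Sum>l\<in>UNIV. of_real (s k l * r l) * (g \<eta> l - 1))"
  have "cmod (g \<eta> k - 1) = cmod (g \<eta> k) * cmod (Complex 0 \<eta> + T)"
    unfolding g_minus_one_eq[OF assms, where k = k, folded T_def] by (rule norm_mult)
  moreover have "cmod (Complex 0 \<eta> + T) \<le> \<eta> + (\<Sum>l\<in>UNIV. s k l * r l * cmod (g \<eta> l - 1))"
  proof -
    have "cmod (Complex 0 \<eta> + T) \<le> cmod (Complex 0 \<eta>) + cmod T" by (rule norm_triangle_ineq)
    also have "cmod (Complex 0 \<eta>) = \<eta>" using assms by (simp add: cmod_def)
    also have "cmod T \<le> (\<Sum>l\<in>UNIV. cmod (of_real (s k l * r l) * (g \<eta> l - 1)))"
      unfolding T_def by (rule norm_sum)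
    also have "\<dots> = (\<Sum>l\<in>UNIV. s k l * r l * cmod (g \<eta> l - 1))"
      by (simp add: norm_mult abs_mult abs_of_pos s_pos r_pos)
    finally show ?thesis by simp
  qed
  ultimately show ?thesis by (simp add: mult_left_mono)
qed

text \<open>Multiplying the QVE in the form \<open>(g\<^sub>k - 1) / g\<^sub>k = i \<eta> + (\<Gamma> (g - 1))\<^sub>k\<close> by
  \<open>r\<^sub>k \<^bold>c\<^bold>n\<^bold>j (g\<^sub>k - 1)\<close> and summing over \<open>k\<close>, the contribution of \<open>\<Gamma>\<close> is a Hermitian form
  (symmetry of \<open>S\<^sub>K\<close>), which disappears on taking imaginary parts.\<close>
lemma energy_identity:
  assumes \<eta>: "0 < \<eta>"
  shows "(\<Sum>k\<in>UNIV. r k * (cmod (g \<eta> k - 1))^2 * Im (g \<eta> k) / (cmod (g \<eta> k))^2)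
    = \<eta> * (\<Sum>k\<in>UNIV. r k * (1 - Re (g \<eta> k)))"
proof -
  define h where "h k = g \<eta> k - 1" for k
  define w where "w k = of_real (r k) * h k" for k
  have h_quot: "h k * inverse (g \<eta> k) = Complex 0 \<eta> + (\<Sum>l\<in>UNIV. of_real (s k l * r l) * h l)" for k
  proof -
    have "h k * inverse (g \<eta> k)
        = (Complex 0 \<eta> + (\<Sum>l\<in>UNIV. of_real (s k l * r l) * h l)) * (g \<eta> k * inverse (g \<eta> k))"
      unfolding h_def g_minus_one_eq[OF \<eta>, of k] by (simp only: mult_ac)
    then show ?thesis using g_nonzero[OF \<eta>, of k] by simp
  qed
  have row: "of_real (r k) * cnj (h k) * (h k * inverse (g \<eta> k))
      = of_real (r k) * cnj (h k) * Complex 0 \<eta> + (\<Sum>l\<in>UNIV. of_real (s k l) * cnj (w k) * w l)" for k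
    unfolding h_quot by (simp add: w_def distrib_left sum_distrib_left mult_ac)
  have lhs: "Im (of_real (r k) * cnj (h k) * (h k * inverse (g \<eta> k)))
      = - (r k * (cmod (h k))^2 * Im (g \<eta> k) / (cmod (g \<eta> k))^2)" for k
  proof -
    have "of_real (r k) * cnj (h k) * (h k * inverse (g \<eta> k))
        = of_real (r k) * (h k * cnj (h k)) * inverse (g \<eta> k)"
      by (simp only: mult.commute mult.left_commute mult.assoc)
    also have "\<dots> = of_real (r k * (cmod (h k))^2) * inverse (g \<eta> k)"
      by (simp only: complex_norm_square[symmetric] of_real_mult)
    finally have "Im (of_real (r k) * cnj (h k) * (h k * inverse (g \<eta> k)))
        = r k * (cmod (h k))^2 * Im (inverse (g \<eta> k))"
      by (simp only: times_complex.sel Re_complex_of_real Im_complex_of_real mult_zero_left add_0_right)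
    also have "Im (inverse (g \<eta> k)) = - Im (g \<eta> k) / (cmod (g \<eta> k))^2"
      by (simp only: inverse_complex.sel(2) cmod_power2 minus_divide_left)
    finally show ?thesis by simp
  qed
  have "- (\<Sum>k\<in>UNIV. r k * (cmod (h k))^2 * Im (g \<eta> k) / (cmod (g \<eta> k))^2)
      = (\<Sum>k\<in>UNIV. Im (of_real (r k) * cnj (h k) * (h k * inverse (g \<eta> k))))"
    by (simp only: lhs sum_negf)
  also have "\<dots> = (\<Sum>k\<in>UNIV. \<eta> * (r k * (Re (g \<eta> k) - 1)))
      + Im (\<Sum>k\<in>UNIV. \<Sum>l\<in>UNIV. of_real (s k l) * cnj (w k) * w l)"
    unfolding row by (simp add: sum.distrib Im_sum h_def mult_ac)
  also have "\<dots> = - (\<eta> * (\<Sum>k\<in>UNIV. r k * (1 - Re (g \<eta> k))))"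
    using Im_hermitian_form_eq_zero[OF s_sym, where I = UNIV and x = w]
    by (simp add: sum_distrib_left sum_negf[symmetric] algebra_simps)
  finally show ?thesis unfolding h_def by (simp only: neg_equal_iff_equal)
qed


lemma g0_QVE: "1 = g0 k - g0 k * (\<Sum>l\<in>UNIV. of_real (s k l * r l) * (g0 l - 1))"
proof -
  have "((\<lambda>\<eta>. Complex 1 (- \<eta>)) \<longlongrightarrow> Complex 1 (- 0)) (at_right 0)"
    by (intro tendsto_intros)
  then have "((\<lambda>\<eta>. Complex 1 (- \<eta>)) \<longlongrightarrow> 1) (at_right 0)"
    by (simp add: one_complex.ctr)
  then have "((\<lambda>\<eta>. Complex 1 (- \<eta>) * g \<eta> k - g \<eta> k * (\<Sum>l\<in>UNIV. of_real (s k l * r l) * (g \<eta> l - 1)))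
      \<longlongrightarrow> 1 * g0 k - g0 k * (\<Sum>l\<in>UNIV. of_real (s k l * r l) * (g0 l - 1))) (at_right 0)"
    by (intro tendsto_intros tendsto_g0)
  moreover have "\<forall>\<^sub>F \<eta> in at_right 0.
      Complex 1 (- \<eta>) * g \<eta> k - g \<eta> k * (\<Sum>l\<in>UNIV. of_real (s k l * r l) * (g \<eta> l - 1)) = 1"
    using eventually_at_right_less by (rule eventually_mono) (rule QVE[symmetric])
  ultimately have "((\<lambda>\<eta>. 1) \<longlongrightarrow> 1 * g0 k - g0 k * (\<Sum>l\<in>UNIV. of_real (s k l * r l) * (g0 l - 1)))
      (at_right (0::real))"
    by (rule Lim_transform_eventually)
  then show ?thesis by (simp add: tendsto_const_iff)
qed

lemma g0_nonzero: "g0 k \<noteq> 0"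
  using g0_QVE[of k] by auto

lemma Im_g0_nonneg: "0 \<le> Im (g0 k)"
  by (rule tendsto_le_at_right[OF tendsto_const tendsto_Im[OF tendsto_g0]])
    (simp add: Im_pos less_imp_le)

lemma Im_g0_pos:
  assumes "Im (g0 j) \<noteq> 0"
  shows "0 < Im (g0 i)"
proof -
  have "(cmod (g0 i))^2 * (s i j * r j * Im (g0 j)) \<le> Im (g0 i)"
  proof (rule tendsto_le_at_right)
    show "((\<lambda>\<eta>. (cmod (g \<eta> i))^2 * (s i j * r j * Im (g \<eta> j)))
        \<longlongrightarrow> (cmod (g0 i))^2 * (s i j * r j * Im (g0 j))) (at_right 0)"
      by (intro tendsto_intros tendsto_g0)
    show "((\<lambda>\<eta>. Im (g \<eta> i)) \<longlongrightarrow> Im (g0 i)) (at_right 0)"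
      by (intro tendsto_intros tendsto_g0)
    fix \<eta> :: real assume \<eta>: "0 < \<eta>"
    have "s i j * r j * Im (g \<eta> j) \<le> (\<Sum>l\<in>UNIV. s i l * r l * Im (g \<eta> l))"
      using \<eta> by (intro member_le_sum mult_nonneg_nonneg Gamma_nonneg less_imp_le Im_pos) auto
    also have "\<dots> \<le> Im (g \<eta> i) / (cmod (g \<eta> i))^2" using Im_g_equation[OF \<eta>, of i] \<eta> by simp
    finally show "(cmod (g \<eta> i))^2 * (s i j * r j * Im (g \<eta> j)) \<le> Im (g \<eta> i)"
      using g_nonzero[OF \<eta>, of i] by (simp add: le_divide_eq mult.commute)
  qed
  moreover have "0 < (cmod (g0 i))^2 * (s i j * r j * Im (g0 j))"
    using g0_nonzero[of i] s_pos r_pos Im_g0_nonneg[of j] assms by simp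
  ultimately show ?thesis by linarith
qed

lemma g0_eq_one_if_Im_pos:
  assumes Im0: "\<And>i. 0 < Im (g0 i)"
  shows "g0 k = 1"
proof -
  have "r k * (cmod (g0 k - 1))^2 * Im (g0 k) / (cmod (g0 k))^2 \<le> 0 * (\<Sum>i\<in>UNIV. r i * (1 - Re (g0 i)))"
  proof (rule tendsto_le_at_right)
    show "((\<lambda>\<eta>. r k * (cmod (g \<eta> k - 1))^2 * Im (g \<eta> k) / (cmod (g \<eta> k))^2)
        \<longlongrightarrow> r k * (cmod (g0 k - 1))^2 * Im (g0 k) / (cmod (g0 k))^2) (at_right 0)"
      using g0_nonzero[of k] by (intro tendsto_intros tendsto_g0) auto
    show "((\<lambda>\<eta>. \<eta> * (\<Sum>i\<in>UNIV. r i * (1 - Re (g \<eta> i))))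
        \<longlongrightarrow> 0 * (\<Sum>i\<in>UNIV. r i * (1 - Re (g0 i)))) (at_right 0)"
      by (intro tendsto_intros tendsto_g0)
    fix \<eta> :: real assume \<eta>: "0 < \<eta>"
    show "r k * (cmod (g \<eta> k - 1))^2 * Im (g \<eta> k) / (cmod (g \<eta> k))^2
        \<le> \<eta> * (\<Sum>i\<in>UNIV. r i * (1 - Re (g \<eta> i)))"
      unfolding energy_identity[OF \<eta>, symmetric] using \<eta> r_pos Im_pos
      by (intro member_le_sum divide_nonneg_nonneg mult_nonneg_nonneg) (auto intro: less_imp_le)
  qed
  then show ?thesis
    using r_pos[of k] Im0[of k] g0_nonzero[of k] by (auto simp: mult_le_0_iff divide_le_0_iff)
qed

lemma Im_g0_eq_zero: "Im (g0 k) = 0"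
proof (rule ccontr)
  assume "Im (g0 k) \<noteq> 0"
  then have "g0 k = 1" using Im_g0_pos by (intro g0_eq_one_if_Im_pos) blast
  with \<open>Im (g0 k) \<noteq> 0\<close> show False by simp
qed

lemma g0_eq_one_of_supersolution:
  assumes \<psi>_pos: "\<And>k. 0 < \<psi> k" and \<psi>_super: "\<And>k. (\<Sum>l\<in>UNIV. s k l * r l * \<psi> l) \<le> \<psi> k"
  shows "g0 k = 1"
proof -
  let ?C = "\<lambda>\<eta>. (\<Sum>i\<in>UNIV. 2 * sqrt (Im (g \<eta> i) / \<psi> i) / cmod (g \<eta> i))"
  have "cmod (g0 k - 1) \<le> (\<Sum>i\<in>UNIV. 2 * sqrt (Im (g0 i) / \<psi> i) / cmod (g0 i)) * sqrt (Im (g0 k) * \<psi> k)"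
  proof (rule tendsto_le_at_right)
    show "((\<lambda>\<eta>. cmod (g \<eta> k - 1)) \<longlongrightarrow> cmod (g0 k - 1)) (at_right 0)"
      by (intro tendsto_intros tendsto_g0)
    show "((\<lambda>\<eta>. ?C \<eta> * sqrt (Im (g \<eta> k) * \<psi> k)) \<longlongrightarrow>
        (\<Sum>i\<in>UNIV. 2 * sqrt (Im (g0 i) / \<psi> i) / cmod (g0 i)) * sqrt (Im (g0 k) * \<psi> k)) (at_right 0)"
      using g0_nonzero \<psi>_pos by (intro tendsto_intros tendsto_g0) (auto simp: less_imp_neq[symmetric])
    fix \<eta> :: real assume \<eta>: "0 < \<eta>"
    show "cmod (g \<eta> k - 1) \<le> ?C \<eta> * sqrt (Im (g \<eta> k) * \<psi> k)"
      using \<eta> g_nonzero[OF \<eta>] Im_pos[OF \<eta>] Im_g_equation[OF \<eta>] norm_g_minus_one_le[OF \<eta>]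
      by (intro subsolution_le_sqrt_bound[where G = "\<lambda>k l. s k l * r l"] Gamma_nonneg \<psi>_pos \<psi>_super)
        auto
  qed
  then show ?thesis by (simp add: Im_g0_eq_zero)
qed

lemma exists_small_modulus:
  assumes \<psi>_pos: "\<And>k. 0 < \<psi> k" and \<psi>_eig: "\<And>k. (\<Sum>l\<in>UNIV. s k l * r l * \<psi> l) = \<mu> * \<psi> k"
    and \<eta>: "0 < \<eta>"
  shows "\<exists>k. \<mu> * (cmod (g \<eta> k))^2 \<le> 1"
proof (rule eigenvalue_le_inverse_square[where G = "\<lambda>k l. s k l * r l" and f = \<psi>
    and v = "\<lambda>k. Im (g \<eta> k)" and c = "\<lambda>k. cmod (g \<eta> k)"])
  fix k
  show "(\<Sum>l\<in>UNIV. s k l * r l * Im (g \<eta> l)) \<le> Im (g \<eta> k) / (cmod (g \<eta> k))^2"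
    using Im_g_equation[OF \<eta>, of k] \<eta> by simp
qed (use Gamma_nonneg Im_pos[OF \<eta>] \<psi>_pos g_nonzero[OF \<eta>] \<psi>_eig in auto)

lemma g0_exists_small_modulus:
  assumes \<psi>_pos: "\<And>k. 0 < \<psi> k" and \<psi>_eig: "\<And>k. (\<Sum>l\<in>UNIV. s k l * r l * \<psi> l) = \<mu> * \<psi> k"
  shows "\<exists>k. \<mu> * (cmod (g0 k))^2 \<le> 1"
proof (rule ccontr)
  assume "\<nexists>k. \<mu> * (cmod (g0 k))^2 \<le> 1"
  then have "1 < \<mu> * (cmod (g0 k))^2" for k by (simp add: not_le)
  then have "\<forall>\<^sub>F \<eta> in at_right 0. 1 < \<mu> * (cmod (g \<eta> k))^2" for k
    by (intro order_tendstoD(1)[OF _ \<open>1 < \<mu> * (cmod (g0 k))^2\<close>] tendsto_intros tendsto_g0)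
  then have "\<forall>\<^sub>F \<eta> in at_right 0. \<forall>k. 1 < \<mu> * (cmod (g \<eta> k))^2"
    by (rule eventually_all_finite)
  moreover have "\<forall>\<^sub>F \<eta> in at_right 0. \<exists>k. \<mu> * (cmod (g \<eta> k))^2 \<le> 1"
    using eventually_at_right_less by (rule eventually_mono) (rule exists_small_modulus[OF \<psi>_pos \<psi>_eig])
  ultimately have "\<forall>\<^sub>F \<eta> in at_right (0::real). False"
    by eventually_elim (meson not_le)
  then show False by simp
qed

end

lemma QVE_path_approaching_one:
  fixes S :: "real^'k^'k" and \<rho> :: "real^'k" and g :: "complex \<Rightarrow> complex^'k"
  assumes S_sym: "transpose S = S" and S_pos: "\<And>k l. 0 < S$k$l" and \<rho>_pos: "\<And>k. 0 < \<rho>$k"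
    and g_QVE: "\<And>z. Im z < 0 \<Longrightarrow> (\<forall>k. 0 < Im (g z $ k)) \<and> QVE S \<rho> z (g z)"
    and g_cont: "continuous_on ({z. Im z < 0} \<union> \<real>) g"
  shows "QVE_path (\<lambda>k l. S$k$l) (\<lambda>k. \<rho>$k) (\<lambda>\<eta> k. g (Complex 1 (- \<eta>)) $ k) (\<lambda>k. g 1 $ k)"
proof
  fix k l :: 'k and \<eta> :: real
  have "S$l$k = transpose S $ k $ l" by (simp add: transpose_def)
  then show "S$k$l = S$l$k" by (simp add: S_sym)
  show "0 < S$k$l" "0 < \<rho>$k" by (fact S_pos \<rho>_pos)+
  show "((\<lambda>\<eta>. g (Complex 1 (- \<eta>)) $ k) \<longlongrightarrow> g 1 $ k) (at_right 0)"
    using tendsto_vec_nth[OF tendsto_from_lower_half_plane[OF g_cont, of 1]] by simp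
  assume "0 < \<eta>"
  then have "(\<forall>k. 0 < Im (g (Complex 1 (- \<eta>)) $ k)) \<and> QVE S \<rho> (Complex 1 (- \<eta>)) (g (Complex 1 (- \<eta>)))"
    by (intro g_QVE) simp
  then show "0 < Im (g (Complex 1 (- \<eta>)) $ k)"
    and "1 = Complex 1 (- \<eta>) * g (Complex 1 (- \<eta>)) $ k - g (Complex 1 (- \<eta>)) $ k *
      (\<Sum>l\<in>UNIV. of_real (S$k$l * \<rho>$l) * (g (Complex 1 (- \<eta>)) $ l - 1))"
    using QVE_componentwise by blast+
qed

theorem mainTheorem5:
  fixes \<rho> :: "real ^ 'k"
    and S :: "real ^ 'k ^ 'k"
    and g :: "complex \<Rightarrow> complex ^ 'k"
  assumes rho_pos: "\<forall>k. 0 < \<rho> $ k \<and> \<rho> $ k < 1"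
    and rho_sum: "(\<Sum>k\<in>UNIV. \<rho> $ k) = 1"
    and S_sym: "transpose S = S"
    and S_pos: "\<forall>k l. 0 < S $ k $ l"
    and g_QVE: "\<forall>z. Im z < 0 \<longrightarrow> (\<forall>k. 0 < Im (g z $ k)) \<and> QVE S \<rho> z (g z)"
    and g_cont: "continuous_on ({z. Im z < 0} \<union> \<real>) g"
  shows "(largest_eigenvalue (Omega_K S \<rho>) \<le> 1 \<longrightarrow> g 1 = 1)
       \<and> (largest_eigenvalue (Omega_K S \<rho>) > 1 \<longrightarrow> g 1 \<noteq> 1)"
proof -
  define \<mu> where "\<mu> = largest_eigenvalue (Omega_K S \<rho>)"
  obtain \<phi> where \<phi>_pos: "\<And>k. 0 < \<phi> k" and \<phi>_eig: "\<And>k. (\<Sum>l\<in>UNIV. S$k$l * \<rho>$l * \<phi> l) = \<mu> * \<phi> k"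
    using Gamma_K_positive_eigenvector[OF S_sym] S_pos rho_pos unfolding \<mu>_def by blast
  interpret QVE_path "\<lambda>k l. S$k$l" "\<lambda>k. \<rho>$k" "\<lambda>\<eta> k. g (Complex 1 (- \<eta>)) $ k" "\<lambda>k. g 1 $ k"
    by (rule QVE_path_approaching_one[OF S_sym _ _ _ g_cont]) (use S_pos rho_pos g_QVE in auto)
  have "g 1 = 1" if "\<mu> \<le> 1"
  proof -
    have "(\<Sum>l\<in>UNIV. S$k$l * \<rho>$l * \<phi> l) \<le> \<phi> k" for k
      using mult_right_mono[OF that less_imp_le[OF \<phi>_pos]] by (simp add: \<phi>_eig)
    then have "g 1 $ k = 1" for k by (intro g0_eq_one_of_supersolution[where \<psi> = \<phi>] \<phi>_pos)
    then show ?thesis by (simp add: vec_eq_iff)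
  qed
  moreover have "\<mu> \<le> 1" if "g 1 = 1"
    using g0_exists_small_modulus[OF \<phi>_pos \<phi>_eig] that by simp
  ultimately show ?thesis unfolding \<mu>_def by force
qed

end
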